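(* For any finite set of atomic recipes $\{R_1,\ldots,R_n\}$, the set $\mathsf{Compose}(\{R_1,\ldots,R_n\})$ is finite.
   Context: Fix disjoint finite sets $\mathcal C$ (comestible nodes) and $\mathcal A$ (action nodes). A type hierarchy is an acyclic directed graph with a unique maximal node; $t_1\preceq t_2$ means $t_1$ is a subtype of or equal to $t_2$, and $t_1\simeq t_2$ means $t_1\preceq t_2$ or $t_2\preceq t_1$. A recipe graph is $(C,A,E)$ with: (1) $\emptyset\subset C\subseteq\mathcal C$, $\emptyset\subset A\subseteq\mathcal A$; (2) $E\subseteq (C\times A)\cup(A\times C)$; (3) $(C\cup A,E)$ is a connected acyclic directed graph; (4) every action node has at least one incoming and one outgoing arc; (5) every comestible node has at most one incoming arc. A recipe is $(C,A,E,F)$ with $(C,A,E)$ a recipe graph and $F$ assigning a comestible type to each node of $C$ and an action type to each node of $A$ such that $F(n)\simeq F(n')$ for $n,n'\in C$ implies $n=n'$. A recipe is atomic if it has exactly one action node. For a recipe $R$: $\mathsf{Acts}(R)$, $\mathsf{Coms}(R)$ are its action and comestible nodes; $\mathsf{In}(R)$ (resp. $\mathsf{Out}(R)$) the comestible nodes with no incoming (resp. outgoing) arc; $\mathsf{Mid}(R)$ the comestible nodes with both. Composition of recipes $R_1=(C_1,A_1,E_1,F_1)$, $R_2=(C_2,A_2,E_2,F_2)$: if (1) $\mathsf{Out}(R_1)\cap\mathsf{In}(R_2)\neq\emptyset$; (2) $\mathsf{Mid}(R_1)\cap\mathsf{Mid}(R_2)=\emptyset$; (3) $\mathsf{Acts}(R_1)\cap\mathsf{Acts}(R_2)=\emptyset$;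 (4) $\mathsf{Out}(R_2)\cap\mathsf{In}(R_1)=\emptyset$; (5) $F_1(n)=F_2(n)$ for all $n\in\mathsf{Out}(R_1)\cap\mathsf{In}(R_2)$; (6) $F_1(n)\not\simeq F_2(n')$ for all $n\in\mathsf{Coms}(R_1)\setminus\mathsf{Out}(R_1)$, $n'\in\mathsf{Coms}(R_2)\setminus\mathsf{In}(R_2)$, then $R_1\oplus R_2=(C_1\cup C_2,A_1\cup A_2,E_1\cup E_2,F_1\cup F_2)$, otherwise $R_1\oplus R_2=\bot$ (failure). For a set of recipes $\{R_1,\ldots,R_n\}$, $\mathsf{Compose}(\{R_1,\ldots,R_n\})$ is the closure of $\{R_1,\ldots,R_n\}$ under $\oplus$: it contains each $R_i$, and whenever $R,R'$ belong to it and $R\oplus R'\neq\bot$, $R\oplus R'$ belongs to it. *)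

theory Defs
  imports Main
begin

text \<open>A type hierarchy on the (finite) set of types T is given by its set of arcs H
  (an arc (t,t') means t is a direct subtype of t').\<close>

definition type_hierarchy :: "'t set \<Rightarrow> ('t \<times> 't) set \<Rightarrow> bool" where
  "type_hierarchy T H \<longleftrightarrow> finite T \<and> H \<subseteq> T \<times> T \<and> acyclic H \<and>
     (\<exists>!m. m \<in> T \<and> (\<forall>t. (m, t) \<notin> H))"

definition subtype_eq :: "('t \<times> 't) set \<Rightarrow> 't \<Rightarrow> 't \<Rightarrow> bool" where
  "subtype_eq H t1 t2 \<longleftrightarrow> (t1, t2) \<in> H\<^sup>*"

definition comparable :: "('t \<times> 't) set \<Rightarrow> 't \<Rightarrow> 't \<Rightarrow> bool" where
  "comparable H t1 t2 \<longleftrightarrow> subtype_eq H t1 t2 \<or> subtype_eq H t2 t1"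

text \<open>A recipe (C, A, E, F); the labelling F is represented as a relation (its graph),
  so that the union F1 \<union> F2 used in composition is literal.\<close>

type_synonym ('n, 't) recipe = "'n set \<times> 'n set \<times> ('n \<times> 'n) set \<times> ('n \<times> 't) set"

definition weakly_connected :: "'n set \<Rightarrow> ('n \<times> 'n) set \<Rightarrow> bool" where
  "weakly_connected V E \<longleftrightarrow> (\<forall>x\<in>V. \<forall>y\<in>V. (x, y) \<in> (E \<union> E\<inverse>)\<^sup>*)"

definition recipe_graph :: "'n set \<Rightarrow> 'n set \<Rightarrow> 'n set \<Rightarrow> 'n set \<Rightarrow> ('n \<times> 'n) set \<Rightarrow> bool" where
  "recipe_graph CC AA C A E \<longleftrightarrow>
     {} \<subset> C \<and> C \<subseteq> CC \<and> {} \<subset> A \<and> A \<subseteq> AA \<and>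
     E \<subseteq> (C \<times> A) \<union> (A \<times> C) \<and>
     weakly_connected (C \<union> A) E \<and> acyclic E \<and>
     (\<forall>a\<in>A. (\<exists>c. (c, a) \<in> E) \<and> (\<exists>c. (a, c) \<in> E)) \<and>
     (\<forall>c\<in>C. \<forall>x y. (x, c) \<in> E \<and> (y, c) \<in> E \<longrightarrow> x = y)"

definition lab :: "('n \<times> 't) set \<Rightarrow> 'n \<Rightarrow> 't" where
  "lab F n = (THE t. (n, t) \<in> F)"

definition recipe ::
  "'n set \<Rightarrow> 'n set \<Rightarrow> 't set \<Rightarrow> ('t \<times> 't) set \<Rightarrow> 't set \<Rightarrow> ('t \<times> 't) set
     \<Rightarrow> ('n, 't) recipe \<Rightarrow> bool" where
  "recipe CC AA TC HC TA HA R \<longleftrightarrow>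
     (case R of (C, A, E, F) \<Rightarrow>
        recipe_graph CC AA C A E \<and>
        Domain F = C \<union> A \<and>
        (\<forall>n\<in>C \<union> A. \<exists>!t. (n, t) \<in> F) \<and>
        (\<forall>n\<in>C. lab F n \<in> TC) \<and> (\<forall>n\<in>A. lab F n \<in> TA) \<and>
        (\<forall>n\<in>C. \<forall>n'\<in>C. comparable HC (lab F n) (lab F n') \<longrightarrow> n = n'))"

definition atomic_recipe ::
  "'n set \<Rightarrow> 'n set \<Rightarrow> 't set \<Rightarrow> ('t \<times> 't) set \<Rightarrow> 't set \<Rightarrow> ('t \<times> 't) set
     \<Rightarrow> ('n, 't) recipe \<Rightarrow> bool" where
  "atomic_recipe CC AA TC HC TA HA R \<longleftrightarrow>
     recipe CC AA TC HC TA HA R \<and> (case R of (C, A, E, F) \<Rightarrow> card A = 1)"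

definition Acts :: "('n, 't) recipe \<Rightarrow> 'n set" where
  "Acts R = (case R of (C, A, E, F) \<Rightarrow> A)"

definition Coms :: "('n, 't) recipe \<Rightarrow> 'n set" where
  "Coms R = (case R of (C, A, E, F) \<Rightarrow> C)"

definition Ins :: "('n, 't) recipe \<Rightarrow> 'n set" where
  "Ins R = (case R of (C, A, E, F) \<Rightarrow> {n \<in> C. \<not> (\<exists>m. (m, n) \<in> E)})"

definition Outs :: "('n, 't) recipe \<Rightarrow> 'n set" where
  "Outs R = (case R of (C, A, E, F) \<Rightarrow> {n \<in> C. \<not> (\<exists>m. (n, m) \<in> E)})"

definition Mid :: "('n, 't) recipe \<Rightarrow> 'n set" where
  "Mid R = (case R of (C, A, E, F) \<Rightarrow> {n \<in> C. (\<exists>m. (m, n) \<in> E) \<and> (\<exists>m. (n, m) \<in> E)})"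

definition labR :: "('n, 't) recipe \<Rightarrow> 'n \<Rightarrow> 't" where
  "labR R n = (case R of (C, A, E, F) \<Rightarrow> lab F n)"

section \<open>Composition (None represents failure \<bottom>)\<close>

definition compose :: "('t \<times> 't) set \<Rightarrow> ('n, 't) recipe \<Rightarrow> ('n, 't) recipe \<Rightarrow> ('n, 't) recipe option" where
  "compose HC R1 R2 =
     (if Outs R1 \<inter> Ins R2 \<noteq> {} \<and>
         Mid R1 \<inter> Mid R2 = {} \<and>
         Acts R1 \<inter> Acts R2 = {} \<and>
         Outs R2 \<inter> Ins R1 = {} \<and>
         (\<forall>n \<in> Outs R1 \<inter> Ins R2. labR R1 n = labR R2 n) \<and>
         (\<forall>n \<in> Coms R1 - Outs R1. \<forall>n' \<in> Coms R2 - Ins R2.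
             \<not> comparable HC (labR R1 n) (labR R2 n'))
      then (case R1 of (C1, A1, E1, F1) \<Rightarrow> case R2 of (C2, A2, E2, F2) \<Rightarrow>
              Some (C1 \<union> C2, A1 \<union> A2, E1 \<union> E2, F1 \<union> F2))
      else None)"

inductive_set Compose :: "('t \<times> 't) set \<Rightarrow> ('n, 't) recipe set \<Rightarrow> ('n, 't) recipe set"
  for HC :: "('t \<times> 't) set" and Rs :: "('n, 't) recipe set" where
  base: "R \<in> Rs \<Longrightarrow> R \<in> Compose HC Rs"
| comp: "R \<in> Compose HC Rs \<Longrightarrow> R' \<in> Compose HC Rs \<Longrightarrow> compose HC R R' = Some R''
           \<Longrightarrow> R'' \<in> Compose HC Rs"

end

theory Submission
  imports Defs
begin

text \<open>A successful composition is the componentwise union of its two arguments. Hence every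
  member of the closure is the componentwise union of some subset of the generating recipes,
  and a finite set has only finitely many subsets.\<close>

definition recipe_Un :: "('n, 't) recipe \<Rightarrow> ('n, 't) recipe \<Rightarrow> ('n, 't) recipe" where
  "recipe_Un R1 R2 = (case R1 of (C1, A1, E1, F1) \<Rightarrow> case R2 of (C2, A2, E2, F2) \<Rightarrow>
     (C1 \<union> C2, A1 \<union> A2, E1 \<union> E2, F1 \<union> F2))"

definition recipe_Union :: "('n, 't) recipe set \<Rightarrow> ('n, 't) recipe" where
  "recipe_Union S = ((\<Union>R\<in>S. fst R), (\<Union>R\<in>S. fst (snd R)), (\<Union>R\<in>S. fst (snd (snd R))),
     (\<Union>R\<in>S. snd (snd (snd R))))"

lemma recipe_Union_singleton: "recipe_Union {R} = R"
  by (cases R) (simp add: recipe_Union_def)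

lemma recipe_Union_Un: "recipe_Union (S1 \<union> S2) = recipe_Un (recipe_Union S1) (recipe_Union S2)"
  by (simp add: recipe_Union_def recipe_Un_def)

lemma compose_Some_eq_recipe_Un:
  assumes "compose HC R1 R2 = Some R"
  shows "R = recipe_Un R1 R2"
  using assms unfolding compose_def recipe_Un_def
  by (cases R1; cases R2) (auto split: if_splits)

lemma Compose_eq_recipe_Union:
  assumes "R \<in> Compose HC Rs"
  obtains S where "S \<subseteq> Rs" and "R = recipe_Union S"
  using assms
proof (induction arbitrary: thesis)
  case (base R)
  show ?case
    by (rule base.prems[of "{R}"]) (simp_all add: base.hyps recipe_Union_singleton)
next
  case (comp R1 R2 R)
  obtain S1 where S1: "S1 \<subseteq> Rs" "R1 = recipe_Union S1" using comp.IH(1) .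
  obtain S2 where S2: "S2 \<subseteq> Rs" "R2 = recipe_Union S2" using comp.IH(2) .
  have "R = recipe_Un R1 R2"
    using comp.hyps(3) by (rule compose_Some_eq_recipe_Un)
  also have "\<dots> = recipe_Union (S1 \<union> S2)"
    by (simp only: S1(2) S2(2) recipe_Union_Un)
  finally show ?case
    using S1(1) S2(1) by (intro comp.prems) simp_all
qed

lemma finite_Compose:
  assumes "finite Rs"
  shows "finite (Compose HC Rs)"
proof (rule finite_subset)
  show "Compose HC Rs \<subseteq> recipe_Union ` Pow Rs"
  proof
    fix R assume "R \<in> Compose HC Rs"
    then obtain S where "S \<subseteq> Rs" and "R = recipe_Union S"
      by (rule Compose_eq_recipe_Union)
    then show "R \<in> recipe_Union ` Pow Rs" by blast
  qed
  show "finite (recipe_Union ` Pow Rs)"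
    using assms by simp
qed

theorem mainTheorem4:
  fixes CC AA :: "'n set" and TC TA :: "'t set" and HC HA :: "('t \<times> 't) set"
    and Rs :: "('n, 't) recipe set"
  assumes "finite CC" and "finite AA" and "CC \<inter> AA = {}"
    and "type_hierarchy TC HC" and "type_hierarchy TA HA"
    and "finite Rs"
    and "\<forall>R\<in>Rs. atomic_recipe CC AA TC HC TA HA R"
  shows "finite (Compose HC Rs)"
  using \<open>finite Rs\<close> by (rule finite_Compose)

end
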